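(* Let $0<\sigma<\frac{1}{2}$. There is a constant $C_\sigma>0$ depending only on $\sigma$ such that for all $\xi_1,\xi_2\in\mathbb{R}$ with $\xi_1\leq\xi_2$, the function $$E_1(\xi;\xi_1,\xi_2)=\begin{cases} e^{\xi-\xi_1}-e^{\xi-\xi_2}, & \xi\leq\xi_1,\\ 0, & \text{otherwise},\end{cases}$$ satisfies $$\left(\int_{\mathbb{R}}|k|^{2\sigma}\,\big|\mathcal{F}(E_1(\cdot;\xi_1,\xi_2))(k)\big|^2\,dk\right)^{1/2}\leq C_\sigma\,(\xi_2-\xi_1).$$
   Context: The Fourier transform is normalized as $\mathcal{F}(f)(k)=\frac{1}{2\pi}\int_{\mathbb{R}}e^{-\mathrm{i}k\xi}f(\xi)\,d\xi$ for $k\in\mathbb{R}$. *)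

theory Defs
  imports "HOL-Analysis.Analysis"
begin

definition E1 :: "real \<Rightarrow> real \<Rightarrow> real \<Rightarrow> real" where
  "E1 xi1 xi2 \<xi> = (if \<xi> \<le> xi1 then exp (\<xi> - xi1) - exp (\<xi> - xi2) else 0)"

definition fourier :: "(real \<Rightarrow> complex) \<Rightarrow> real \<Rightarrow> complex" where
  "fourier f k = complex_of_real (1 / (2 * pi)) *
     (LINT \<xi>|lborel. exp (- \<i> * complex_of_real (k * \<xi>)) * f \<xi>)"

end

theory Submission
  imports Defs
begin

(* On (-\<infinity>, \<xi>1) the function E1 equals (e^-\<xi>1 - e^-\<xi>2) e^\<xi>, so its Fourier transform is
   explicit, with modulus (1 - e^(\<xi>1 - \<xi>2)) / (2\<pi> sqrt (1 + k^2)). Hence the weighted integral is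
   ((1 - e^(\<xi>1 - \<xi>2)) / 2\<pi>)^2 times \<integral> |k|^(2\<sigma>) / (1 + k^2) dk, which is finite because
   0 \<le> 2\<sigma> and 2\<sigma> - 2 < -1; finally 1 - e^-d \<le> d. *)

lemma tendsto_exp_scaled_at_bot:
  fixes r :: real
  assumes "0 < r"
  shows "((\<lambda>x. exp (r * x)) \<longlongrightarrow> 0) at_bot"
  by (intro filterlim_compose[OF exp_at_bot]
        filterlim_tendsto_pos_mult_at_bot[OF tendsto_const assms filterlim_ident])

lemma set_integrable_exp_lessThan:
  fixes z :: complex
  assumes "0 < Re z"
  shows "set_integrable lborel {..<a} (\<lambda>x. exp (z * of_real x))"
proof -
  have "set_integrable lborel (einterval (-\<infinity>) (ereal a)) (\<lambda>x. exp (Re z * x))"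
    using assms
    by (intro interval_integral_FTC_nonneg(1)[where F="\<lambda>x. exp (Re z * x) / Re z" and A=0
          and B="exp (Re z * a) / Re z"])
       (auto intro!: derivative_eq_intros continuous_intros tendsto_intros
          tendsto_divide_zero tendsto_exp_scaled_at_bot simp: ereal_tendsto_simps)
  then have "set_integrable lborel {..<a} (\<lambda>x. exp (Re z * x))"
    by (simp add: einterval_def lessThan_def)
  then show ?thesis
    unfolding set_integrable_def
    by (rule Bochner_Integration.integrable_bound) (auto simp: norm_exp_eq_Re indicator_def)
qed

lemma set_integral_exp_lessThan:
  fixes z :: complex
  assumes "0 < Re z"
  shows "(LINT x:{..<a}|lborel. exp (z * of_real x)) = exp (z * of_real a) / z"
proof -
  have "z \<noteq> 0" using assms by auto
  let ?F = "\<lambda>x. exp (z * of_real x) / z"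
  have "(LBINT x=-\<infinity>..ereal a. exp (z * of_real x)) = ?F a - 0"
  proof (rule interval_integral_FTC_integrable)
    show "(?F has_vector_derivative exp (z * of_real x)) (at x)" for x
    proof -
      have "((\<lambda>w. exp (z * w) / z) has_field_derivative exp (z * of_real x)) (at (of_real x))"
        using \<open>z \<noteq> 0\<close> by (auto intro!: derivative_eq_intros)
      from has_vector_derivative_real_field[OF this] show ?thesis by simp
    qed
    show "set_integrable lborel (einterval (-\<infinity>) (ereal a)) (\<lambda>x. exp (z * of_real x))"
      using set_integrable_exp_lessThan[OF assms] by (simp add: einterval_def lessThan_def)
    have "((\<lambda>x. norm (?F x)) \<longlongrightarrow> 0) at_bot"
      using tendsto_divide_zero[OF tendsto_exp_scaled_at_bot[OF assms], of "norm z"]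
      by (simp add: norm_divide norm_exp_eq_Re)
    then show "((?F \<circ> real_of_ereal) \<longlongrightarrow> 0) (at_right (-\<infinity>))"
      unfolding ereal_tendsto_simps by (rule tendsto_norm_zero_cancel)
    have "isCont ?F a" using \<open>z \<noteq> 0\<close> by (intro continuous_intros)
    then show "((?F \<circ> real_of_ereal) \<longlongrightarrow> ?F a) (at_left (ereal a))"
      unfolding ereal_tendsto_simps isCont_def filterlim_at_split by blast
  qed (auto intro!: continuous_intros)
  then show ?thesis
    by (simp add: interval_lebesgue_integral_def einterval_def lessThan_def)
qed

lemma fourier_E1:
  fixes a b k :: real
  defines "z \<equiv> Complex 1 (-k)"
  shows "fourier (\<lambda>\<xi>. complex_of_real (E1 a b \<xi>)) k
    = of_real ((exp (-a) - exp (-b)) / (2 * pi)) * (exp (z * of_real a) / z)"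
proof -
  define c where "c = exp (-a) - exp (-b)"
  have integrand: "exp (- \<i> * of_real (k * \<xi>)) * of_real (E1 a b \<xi>)
      = indicator {..<a} \<xi> *\<^sub>R (of_real c * exp (z * of_real \<xi>))" if "\<xi> \<noteq> a" for \<xi>
  proof (cases "\<xi> < a")
    case True
    have "- \<i> * of_real (k * \<xi>) + of_real \<xi> = z * of_real \<xi>"
      by (simp add: z_def complex_eq_iff)
    then have "exp (- \<i> * of_real (k * \<xi>)) * exp (of_real \<xi>) = exp (z * of_real \<xi>)"
      by (simp flip: exp_add)
    moreover have "complex_of_real (E1 a b \<xi>) = of_real c * exp (of_real \<xi>)"
      using True by (simp add: E1_def c_def exp_diff exp_minus field_simps flip: exp_of_real)
    ultimately show ?thesis using True by (simp add: algebra_simps)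
  qed (use that in \<open>simp add: E1_def\<close>)
  have "AE \<xi> in lborel. exp (- \<i> * of_real (k * \<xi>)) * of_real (E1 a b \<xi>)
      = indicator {..<a} \<xi> *\<^sub>R (of_real c * exp (z * of_real \<xi>))"
    using AE_lborel_singleton[of a] by (rule eventually_mono) (use integrand in blast)
  then have "(LINT \<xi>|lborel. exp (- \<i> * of_real (k * \<xi>)) * of_real (E1 a b \<xi>))
      = (LINT \<xi>:{..<a}|lborel. of_real c * exp (z * of_real \<xi>))"
    unfolding set_lebesgue_integral_def by (rule integral_cong_AE[rotated 2]) (auto simp: E1_def)
  also have "\<dots> = of_real c * (exp (z * of_real a) / z)"
    by (simp add: set_integral_mult_right set_integral_exp_lessThan z_def)
  finally show ?thesis
    by (simp add: fourier_def c_def)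
qed

lemma norm_fourier_E1:
  "cmod (fourier (\<lambda>\<xi>. complex_of_real (E1 a b \<xi>)) k)
    = \<bar>1 - exp (a - b)\<bar> / (2 * pi * sqrt (1 + k\<^sup>2))"
proof -
  have "cmod (Complex 1 (-k)) = sqrt (1 + k\<^sup>2)"
    by (simp add: cmod_def)
  moreover have "cmod (exp (Complex 1 (-k) * of_real a)) = exp a"
    by (simp add: norm_exp_eq_Re)
  moreover have "\<bar>exp (-a) - exp (-b)\<bar> * exp a = \<bar>1 - exp (a - b)\<bar>"
    by (simp add: exp_diff exp_minus field_simps flip: abs_mult)
  ultimately show ?thesis
    unfolding fourier_E1 norm_mult norm_divide norm_of_real
    by (simp add: field_simps)
qed

lemma nn_integral_reflect_real:
  fixes f :: "real \<Rightarrow> ennreal"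
  assumes "f \<in> borel_measurable borel"
  shows "(\<integral>\<^sup>+ x. f (- x) \<partial>lborel) = (\<integral>\<^sup>+ x. f x \<partial>lborel)"
proof -
  have "(\<integral>\<^sup>+ x. f (- x) \<partial>lborel) = (\<integral>\<^sup>+ x. f x \<partial>distr lborel borel uminus)"
    using assms by (simp add: nn_integral_distr)
  then show ?thesis
    by (simp add: lborel_distr_uminus)
qed

lemma powr_div_one_plus_square_le:
  fixes k s :: real
  assumes "k \<noteq> 0"
  shows "\<bar>k\<bar> powr s / (1 + k\<^sup>2) \<le> \<bar>k\<bar> powr (s - 2)"
proof -
  have "\<bar>k\<bar> powr s / (1 + k\<^sup>2) \<le> \<bar>k\<bar> powr s / k\<^sup>2"
    using assms by (intro divide_left_mono mult_pos_pos) (auto simp: add_pos_nonneg)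
  also have "\<dots> = \<bar>k\<bar> powr (s - 2)"
    using assms by (simp add: powr_diff powr_numeral)
  finally show ?thesis .
qed

lemma nn_integral_powr_div_one_plus_square_finite:
  fixes s :: real
  assumes "0 \<le> s" and "s < 1"
  shows "(\<integral>\<^sup>+ k. ennreal (\<bar>k\<bar> powr s / (1 + k\<^sup>2)) \<partial>lborel) < \<infinity>"
proof -
  define tail :: "real \<Rightarrow> ennreal" where "tail k = ennreal (k powr (s - 2)) * indicator {1..} k" for k
  have tail_measurable: "tail \<in> borel_measurable borel"
    unfolding tail_def by measurable
  have bound: "ennreal (\<bar>k\<bar> powr s / (1 + k\<^sup>2)) \<le> indicator {-1..1} k + (tail k + tail (- k))" for k
  proof (cases "\<bar>k\<bar> \<le> 1")
    case True
    then have "\<bar>k\<bar> powr s \<le> 1"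
      using assms by (intro powr_le1) auto
    then have "\<bar>k\<bar> powr s / (1 + k\<^sup>2) \<le> 1"
      by (simp add: add_pos_nonneg add_increasing2)
    with True show ?thesis
      by (intro add_increasing2) (auto simp: indicator_def)
  next
    case False
    then have "ennreal (\<bar>k\<bar> powr s / (1 + k\<^sup>2)) \<le> tail k + tail (- k)"
      using powr_div_one_plus_square_le[of k s] by (auto simp: tail_def abs_if ennreal_leI)
    then show ?thesis
      by (rule add_increasing[rotated]) simp
  qed
  have tail_integral: "(\<integral>\<^sup>+ k. tail k \<partial>lborel) = ennreal (- (1 powr (s - 1)) / (s - 1))"
    unfolding tail_def
    by (rule nn_integral_has_integral_lebesgue')
       (use has_integral_powr_to_inf[of "s - 2" 1] assms in auto)
  have "(\<integral>\<^sup>+ k. ennreal (\<bar>k\<bar> powr s / (1 + k\<^sup>2)) \<partial>lborel)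
      \<le> (\<integral>\<^sup>+ k. indicator {-1..1} k + (tail k + tail (- k)) \<partial>lborel)"
    by (intro nn_integral_mono bound)
  also have "\<dots> = 2 + ((\<integral>\<^sup>+ k. tail k \<partial>lborel) + (\<integral>\<^sup>+ k. tail (- k) \<partial>lborel))"
    using tail_measurable by (simp add: nn_integral_add)
  also have "\<dots> < \<infinity>"
    unfolding nn_integral_reflect_real[OF tail_measurable] tail_integral
    by (simp add: less_top[symmetric])
  finally show ?thesis .
qed

lemma nn_integral_weighted_fourier_E1:
  fixes a b s :: real
  shows "(\<integral>\<^sup>+ k. ennreal (\<bar>k\<bar> powr s * (cmod (fourier (\<lambda>\<xi>. complex_of_real (E1 a b \<xi>)) k))\<^sup>2) \<partial>lborel)
    = ennreal (((1 - exp (a - b)) / (2 * pi))\<^sup>2)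
      * (\<integral>\<^sup>+ k. ennreal (\<bar>k\<bar> powr s / (1 + k\<^sup>2)) \<partial>lborel)"
proof -
  have "\<bar>k\<bar> powr s * (cmod (fourier (\<lambda>\<xi>. complex_of_real (E1 a b \<xi>)) k))\<^sup>2
      = ((1 - exp (a - b)) / (2 * pi))\<^sup>2 * (\<bar>k\<bar> powr s / (1 + k\<^sup>2))" for k
    by (simp add: norm_fourier_E1 power_divide power_mult_distrib add_nonneg_nonneg)
  then have "ennreal (\<bar>k\<bar> powr s * (cmod (fourier (\<lambda>\<xi>. complex_of_real (E1 a b \<xi>)) k))\<^sup>2)
      = ennreal (((1 - exp (a - b)) / (2 * pi))\<^sup>2) * ennreal (\<bar>k\<bar> powr s / (1 + k\<^sup>2))" for k
    by (simp only: ennreal_mult' zero_le_power2)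
  then show ?thesis
    by (simp add: nn_integral_cmult)
qed

lemma sqrt_nn_integral_weighted_fourier_E1_le:
  fixes a b s J :: real
  assumes "a \<le> b" and "0 \<le> J"
    and J: "(\<integral>\<^sup>+ k. ennreal (\<bar>k\<bar> powr s / (1 + k\<^sup>2)) \<partial>lborel) = ennreal J"
  shows "sqrt (enn2real (\<integral>\<^sup>+ k. ennreal (\<bar>k\<bar> powr s *
      (cmod (fourier (\<lambda>\<xi>. complex_of_real (E1 a b \<xi>)) k))\<^sup>2) \<partial>lborel)) \<le> (b - a) / (2 * pi) * sqrt J"
proof -
  define D where "D = 1 - exp (a - b)"
  have "0 \<le> D"
    using \<open>a \<le> b\<close> by (simp add: D_def)
  have "D \<le> b - a"
    using exp_ge_add_one_self[of "a - b"] unfolding D_def by linarith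
  have "sqrt (enn2real (\<integral>\<^sup>+ k. ennreal (\<bar>k\<bar> powr s *
      (cmod (fourier (\<lambda>\<xi>. complex_of_real (E1 a b \<xi>)) k))\<^sup>2) \<partial>lborel)) = sqrt ((D / (2 * pi))\<^sup>2 * J)"
    using \<open>0 \<le> J\<close> by (simp add: nn_integral_weighted_fourier_E1 J D_def[symmetric] flip: ennreal_mult')
  also have "\<dots> = D / (2 * pi) * sqrt J"
    using \<open>0 \<le> D\<close> by (simp add: real_sqrt_mult)
  also have "\<dots> \<le> (b - a) / (2 * pi) * sqrt J"
    using \<open>D \<le> b - a\<close> \<open>0 \<le> J\<close> by (intro mult_right_mono divide_right_mono) auto
  finally show ?thesis .
qed

theorem lemma3p1:
  fixes \<sigma> :: real
  assumes "0 < \<sigma>" and "\<sigma> < 1/2"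
  shows "\<exists>C>0. \<forall>xi1 xi2 :: real. xi1 \<le> xi2 \<longrightarrow>
     sqrt (enn2real (\<integral>\<^sup>+ k. ennreal (\<bar>k\<bar> powr (2 * \<sigma>) *
        (cmod (fourier (\<lambda>\<xi>. complex_of_real (E1 xi1 xi2 \<xi>)) k))\<^sup>2) \<partial>lborel))
       \<le> C * (xi2 - xi1)
     \<and> (\<integral>\<^sup>+ k. ennreal (\<bar>k\<bar> powr (2 * \<sigma>) *
        (cmod (fourier (\<lambda>\<xi>. complex_of_real (E1 xi1 xi2 \<xi>)) k))\<^sup>2) \<partial>lborel) < \<infinity>"
proof -
  have "(\<integral>\<^sup>+ k. ennreal (\<bar>k\<bar> powr (2 * \<sigma>) / (1 + k\<^sup>2)) \<partial>lborel) < \<infinity>"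
    using assms by (intro nn_integral_powr_div_one_plus_square_finite) auto
  then obtain J where J: "(\<integral>\<^sup>+ k. ennreal (\<bar>k\<bar> powr (2 * \<sigma>) / (1 + k\<^sup>2)) \<partial>lborel) = ennreal J"
    and "0 \<le> J"
    by (cases rule: ennreal_cases) auto
  define C where "C = sqrt J / (2 * pi) + 1"
  have "(b - a) / (2 * pi) * sqrt J \<le> C * (b - a)" if "a \<le> b" for a b :: real
    using that by (simp add: C_def algebra_simps)
  moreover have "C > 0"
    using \<open>0 \<le> J\<close> by (simp add: C_def add_nonneg_pos)
  ultimately show ?thesis
    by (intro exI[of _ C] conjI allI impI
          order.trans[OF sqrt_nn_integral_weighted_fourier_E1_le[OF _ \<open>0 \<le> J\<close> J]])
       (simp_all add: nn_integral_weighted_fourier_E1 J flip: ennreal_mult')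
qed

end
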